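(* Let $G$ be a graph that contains an induced $(n,m)$-necklace with $n\ge 5$ and $m\ge 1$ whose cycle has good neighbours in $G$. Then $G$ diverges under the operator $KB_e$, i.e. $\lim_{k\to\infty}|V(KB_e^k(G))|=\infty$.
   Context: All graphs are finite, simple and undirected. A biclique of a graph $G$ is a maximal (with respect to inclusion) induced subgraph of $G$ that is a complete bipartite graph $K_{p,q}$ with $p,q\ge 1$. The edge-biclique graph $KB_e(G)$ has one vertex for each biclique of $G$, two distinct vertices being adjacent iff the corresponding bicliques share at least one edge; $KB_e^0(G)=G$, $KB_e^k(G)=KB_e(KB_e^{k-1}(G))$. For $n\ge3$, $m\ge1$, the $(n,m)$-necklace is the graph on $n+m$ vertices consisting of an induced cycle $C_n$ and a complete graph $K_m$ such that, for one fixed edge $xy$ of the cycle, every vertex of the $K_m$ is adjacent to $x$ and $y$ and to no other vertex of the cycle. An induced cycle $C=v_0\ldots v_{n-1}$ ($n\ge5$) of a graph $H$ has good neighbours in $H$ if for every vertex $v\in V(H)\setminus V(C)$ and every $i$ (indices mod $n$), $\{v_{i-1},v_{i+1}\}\subseteq N(v)$ implies $v_i\in N(v)$. *)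

theory Defs
  imports Main
begin

type_synonym 'a graph = "'a set \<times> 'a set set"

definition verts :: "'a graph \<Rightarrow> 'a set" where "verts G = fst G"
definition edges :: "'a graph \<Rightarrow> 'a set set" where "edges G = snd G"

definition adj :: "'a graph \<Rightarrow> 'a \<Rightarrow> 'a \<Rightarrow> bool" where
  "adj G x y \<longleftrightarrow> {x, y} \<in> edges G"

definition wf_graph :: "'a graph \<Rightarrow> bool" where
  "wf_graph G \<longleftrightarrow> finite (verts G) \<and> (\<forall>e\<in>edges G. e \<subseteq> verts G \<and> card e = 2)"

definition induces_complete_bipartite :: "'a graph \<Rightarrow> 'a set \<Rightarrow> bool" where
  "induces_complete_bipartite G B \<longleftrightarrow> B \<subseteq> verts G \<and>
     (\<exists>X Y. X \<noteq> {} \<and> Y \<noteq> {} \<and> X \<inter> Y = {} \<and> X \<union> Y = B \<and>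
        (\<forall>x\<in>X. \<forall>y\<in>Y. adj G x y) \<and>
        (\<forall>x\<in>X. \<forall>x'\<in>X. \<not> adj G x x') \<and>
        (\<forall>y\<in>Y. \<forall>y'\<in>Y. \<not> adj G y y'))"

definition is_biclique :: "'a graph \<Rightarrow> 'a set \<Rightarrow> bool" where
  "is_biclique G B \<longleftrightarrow> induces_complete_bipartite G B \<and>
     (\<forall>B'. B \<subset> B' \<longrightarrow> \<not> induces_complete_bipartite G B')"

definition KBe :: "'a graph \<Rightarrow> 'a set graph" where
  "KBe G = ({B. is_biclique G B},
            {{B1, B2} | B1 B2. is_biclique G B1 \<and> is_biclique G B2 \<and> B1 \<noteq> B2 \<and>
                (\<exists>e\<in>edges G. e \<subseteq> B1 \<inter> B2)})"

text \<open>Relabel a finite graph isomorphically onto the vertex set {0..<card V} (so that the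
  operator can be iterated within one type; the number of vertices is unaffected).\<close>
definition relabel :: "'a graph \<Rightarrow> nat graph" where
  "relabel G = (let f = (SOME f. bij_betw f (verts G) {..<card (verts G)})
                in (f ` verts G, (\<lambda>e. f ` e) ` edges G))"

text \<open>KBe_iter k G is (an isomorphic copy of) KB_e^k(G).\<close>
fun KBe_iter :: "nat \<Rightarrow> 'a graph \<Rightarrow> nat graph" where
  "KBe_iter 0 G = relabel G"
| "KBe_iter (Suc k) G = relabel (KBe (KBe_iter k G))"

text \<open>G contains an induced (n,m)-necklace with cycle c 0 ... c (n-1) and clique K,
  the clique being attached to the cycle edge c 0 c 1.\<close>
definition induced_necklace :: "'a graph \<Rightarrow> nat \<Rightarrow> nat \<Rightarrow> (nat \<Rightarrow> 'a) \<Rightarrow> 'a set \<Rightarrow> bool" where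
  "induced_necklace G n m c K \<longleftrightarrow>
     n \<ge> 3 \<and> m \<ge> 1 \<and>
     inj_on c {..<n} \<and> c ` {..<n} \<subseteq> verts G \<and>
     K \<subseteq> verts G \<and> finite K \<and> card K = m \<and> K \<inter> c ` {..<n} = {} \<and>
     (\<forall>i<n. \<forall>j<n. adj G (c i) (c j) \<longleftrightarrow> (j = (i + 1) mod n \<or> i = (j + 1) mod n)) \<and>
     (\<forall>x\<in>K. \<forall>y\<in>K. x \<noteq> y \<longrightarrow> adj G x y) \<and>
     (\<forall>x\<in>K. \<forall>i<n. adj G x (c i) \<longleftrightarrow> (i = 0 \<or> i = 1))"

definition good_neighbours :: "'a graph \<Rightarrow> nat \<Rightarrow> (nat \<Rightarrow> 'a) \<Rightarrow> bool" where
  "good_neighbours G n c \<longleftrightarrow>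
     (\<forall>v\<in>verts G - c ` {..<n}. \<forall>i<n.
        adj G v (c ((i + n - 1) mod n)) \<and> adj G v (c ((i + 1) mod n)) \<longrightarrow> adj G v (c i))"

end

theory Submission
  imports Defs
begin

(*
  Write C for the induced cycle c 0, ..., c (n - 1).  Because n >= 5 and C has good
  neighbours, every biclique through a path c (i - 1), c i, c (i + 1) is a star centred
  at c i, and choosing one such star for every i yields again an induced n-cycle with good
  neighbours in KB_e(G).  Call a vertex outside the cycle whose cycle neighbours are exactly
  two consecutive vertices an ear; a vertex of the necklace clique is an ear at c 0 c 1.

  Applying KB_e to a clique of ears at the middle edge c 1 c 2 gives two mutually
  non-adjacent cliques of the same size, of ears at the flanking edges c 0 c 1 and c 2 c 3:
  each ear z yields the stars at c 1 and at c 2 through z.  Applying KB_e once more merges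
  two such flanking cliques into a single clique of ears at c 1 c 2 whose size is their
  sum.  So the number of ears, and with it the number of vertices, doubles every two steps.
*)

lemma adj_commute: "adj H u v \<longleftrightarrow> adj H v u"
  unfolding adj_def by (simp add: insert_commute)

lemma adj_irrefl: "wf_graph H \<Longrightarrow> \<not> adj H u u"
  unfolding adj_def wf_graph_def by fastforce

lemma adj_in_verts: "wf_graph H \<Longrightarrow> adj H u v \<Longrightarrow> u \<in> verts H \<and> v \<in> verts H"
  unfolding adj_def wf_graph_def by blast

lemma finite_verts: "wf_graph H \<Longrightarrow> finite (verts H)"
  unfolding wf_graph_def by blast

lemma induces_complete_bipartite_adj_parity:
  assumes "induces_complete_bipartite H B" "u \<in> B" "v \<in> B" "w \<in> B"
  shows "adj H u w \<longleftrightarrow> (adj H u v \<longleftrightarrow> \<not> adj H v w)"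
proof -
  obtain X Y where XY: "X \<inter> Y = {}" "X \<union> Y = B" "\<forall>x\<in>X. \<forall>y\<in>Y. adj H x y"
    "\<forall>x\<in>X. \<forall>x'\<in>X. \<not> adj H x x'" "\<forall>y\<in>Y. \<forall>y'\<in>Y. \<not> adj H y y'"
    using assms(1) unfolding induces_complete_bipartite_def by blast
  have side: "adj H a b \<longleftrightarrow> (a \<in> X \<longleftrightarrow> b \<in> Y)" if "a \<in> B" "b \<in> B" for a b
  proof (cases "a \<in> X")
    case True
    then have "a \<notin> Y" using XY(1) by blast
    show ?thesis
    proof (cases "b \<in> Y")
      case True then show ?thesis using \<open>a \<in> X\<close> XY(3) by blast
    next
      case False then have "b \<in> X" using XY(2) that by blast
      then show ?thesis using \<open>a \<in> X\<close> XY(4) False by blast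
    qed
  next
    case False
    then have "a \<in> Y" using XY(2) that by blast
    show ?thesis
    proof (cases "b \<in> Y")
      case True then show ?thesis using \<open>a \<in> Y\<close> XY(5) False by blast
    next
      case False then have "b \<in> X" using XY(2) that by blast
      then show ?thesis using \<open>a \<in> Y\<close> XY(3) adj_commute[of H a b] False \<open>a \<notin> X\<close> by blast
    qed
  qed
  have k1: "adj H u w \<longleftrightarrow> (u \<in> X \<longleftrightarrow> w \<in> Y)" using side assms by blast
  have k2: "adj H u v \<longleftrightarrow> (u \<in> X \<longleftrightarrow> v \<in> Y)" using side assms by blast
  have k3: "adj H v w \<longleftrightarrow> (v \<in> X \<longleftrightarrow> w \<in> Y)" using side assms by blast
  have d: "\<And>a. a \<in> B \<Longrightarrow> (a \<in> X \<longleftrightarrow> a \<notin> Y)" using XY(1,2) by blast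
  show ?thesis unfolding k1 k2 k3 using d assms(2-4) by blast
qed

lemma biclique_induces_complete_bipartite: "is_biclique H B \<Longrightarrow> induces_complete_bipartite H B"
  unfolding is_biclique_def by (rule conjunct1)

lemma biclique_adj_parity:
  assumes "is_biclique H B" "u \<in> B" "v \<in> B" "w \<in> B"
  shows "adj H u w \<longleftrightarrow> (adj H u v \<longleftrightarrow> \<not> adj H v w)"
  using induces_complete_bipartite_adj_parity[OF biclique_induces_complete_bipartite[OF assms(1)] assms(2-4)] .

lemma biclique_subset_verts: "is_biclique H B \<Longrightarrow> B \<subseteq> verts H"
  using biclique_induces_complete_bipartite unfolding induces_complete_bipartite_def by blast

lemma biclique_edge_adj_any:
  assumes "is_biclique H B" "u \<in> B" "v \<in> B" "x \<in> B" "adj H u v"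
  shows "adj H u x \<or> adj H v x"
  using biclique_adj_parity[OF assms(1) assms(2,3,4)] assms(5) by metis

lemma induces_complete_bipartite_path3:
  assumes "wf_graph H" "adj H m a" "adj H m b" "\<not> adj H a b" "a \<noteq> b"
  shows "induces_complete_bipartite H {m, a, b}"
proof -
  have "m \<noteq> a" "m \<noteq> b" using assms(2,3) adj_irrefl[OF assms(1)] by blast+
  moreover have "{m, a, b} \<subseteq> verts H"
    using adj_in_verts[OF assms(1) assms(2)] adj_in_verts[OF assms(1) assms(3)] by blast
  ultimately show ?thesis unfolding induces_complete_bipartite_def
    using assms adj_irrefl[OF assms(1)] adj_commute[of H b a]
    by (intro conjI exI[of _ "{m}"] exI[of _ "{a, b}"]) auto
qed

lemma ex_biclique_superset:
  assumes "wf_graph H" "induces_complete_bipartite H S"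
  shows "\<exists>B. is_biclique H B \<and> S \<subseteq> B"
proof -
  let ?F = "{B. S \<subseteq> B \<and> induces_complete_bipartite H B}"
  have "?F \<subseteq> Pow (verts H)" unfolding induces_complete_bipartite_def by blast
  then have fin: "finite ?F" using finite_verts[OF assms(1)] by (meson finite_Pow_iff finite_subset)
  have "S \<in> ?F" using assms(2) by blast
  then obtain M where M: "M \<in> ?F" "\<forall>B\<in>?F. M \<le> B \<longrightarrow> M = B"
    using finite_has_maximal[OF fin] by blast
  have "is_biclique H M" unfolding is_biclique_def
  proof (intro conjI allI impI)
    show "induces_complete_bipartite H M" using M(1) by blast
  next
    fix B' assume "M \<subset> B'"
    then show "\<not> induces_complete_bipartite H B'" using M by blast
  qed
  then show ?thesis using M(1) by blast
qed

definition biclique_containing :: "'a graph \<Rightarrow> 'a set \<Rightarrow> 'a set" where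
  "biclique_containing H S = (SOME B. is_biclique H B \<and> S \<subseteq> B)"

lemma biclique_containing:
  assumes "wf_graph H" "induces_complete_bipartite H S"
  shows "is_biclique H (biclique_containing H S)" "S \<subseteq> biclique_containing H S"
  using someI_ex[OF ex_biclique_superset[OF assms]] unfolding biclique_containing_def by blast+

lemma biclique_containing_path3:
  assumes "wf_graph H" "adj H m a" "adj H m b" "\<not> adj H a b" "a \<noteq> b"
  shows "is_biclique H (biclique_containing H {m, a, b})" "{m, a, b} \<subseteq> biclique_containing H {m, a, b}"
  using biclique_containing[OF assms(1) induces_complete_bipartite_path3[OF assms]] by blast+

lemma verts_KBe: "verts (KBe H) = {B. is_biclique H B}"
  unfolding KBe_def verts_def by simp

lemma ex_edge_subset_iff:
  assumes "wf_graph H"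
  shows "(\<exists>e\<in>edges H. e \<subseteq> S) \<longleftrightarrow> (\<exists>u\<in>S. \<exists>v\<in>S. adj H u v)"
proof
  assume "\<exists>e\<in>edges H. e \<subseteq> S"
  then obtain e where e: "e \<in> edges H" "e \<subseteq> S" by blast
  then have "card e = 2" using assms unfolding wf_graph_def by blast
  then obtain x y where xy: "e = {x, y}" unfolding card_2_iff by blast
  then have "adj H x y" unfolding adj_def using e(1) by simp
  moreover have "x \<in> S" "y \<in> S" using e(2) xy by auto
  ultimately show "\<exists>u\<in>S. \<exists>v\<in>S. adj H u v" by blast
next
  assume "\<exists>u\<in>S. \<exists>v\<in>S. adj H u v"
  then obtain u v where "u \<in> S" "v \<in> S" "{u, v} \<in> edges H" unfolding adj_def by blast
  then show "\<exists>e\<in>edges H. e \<subseteq> S" by (intro bexI[of _ "{u, v}"]) auto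
qed

lemma edges_KBe:
  "edges (KBe H) = {{B1, B2} | B1 B2. is_biclique H B1 \<and> is_biclique H B2 \<and> B1 \<noteq> B2 \<and>
     (\<exists>e\<in>edges H. e \<subseteq> B1 \<inter> B2)}"
  unfolding KBe_def edges_def by simp

lemma adj_KBe_iff:
  assumes "wf_graph H"
  shows "adj (KBe H) B1 B2 \<longleftrightarrow> is_biclique H B1 \<and> is_biclique H B2 \<and> B1 \<noteq> B2 \<and>
    (\<exists>u\<in>B1 \<inter> B2. \<exists>v\<in>B1 \<inter> B2. adj H u v)"
proof -
  let ?P = "\<lambda>C1 C2. is_biclique H C1 \<and> is_biclique H C2 \<and> C1 \<noteq> C2 \<and> (\<exists>e\<in>edges H. e \<subseteq> C1 \<inter> C2)"
  have sym: "?P C1 C2 \<longleftrightarrow> ?P C2 C1" for C1 C2 unfolding Int_commute[of C1 C2] by blast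
  have "adj (KBe H) B1 B2 \<longleftrightarrow> (\<exists>C1 C2. {B1, B2} = {C1, C2} \<and> ?P C1 C2)"
    unfolding adj_def edges_KBe by (rule mem_Collect_eq)
  also have "\<dots> \<longleftrightarrow> ?P B1 B2" unfolding doubleton_eq_iff using sym by blast
  finally show ?thesis unfolding ex_edge_subset_iff[OF assms] .
qed

lemma adj_KBeI:
  assumes "wf_graph H" "is_biclique H B1" "is_biclique H B2" "B1 \<noteq> B2"
    "u \<in> B1" "u \<in> B2" "v \<in> B1" "v \<in> B2" "adj H u v"
  shows "adj (KBe H) B1 B2"
  using assms adj_KBe_iff[OF assms(1)] by blast

lemma adj_KBe_common_neighbour:
  assumes "wf_graph H" "adj (KBe H) B1 B2" "x \<in> B1"
  obtains w where "w \<in> B1" "w \<in> B2" "adj H w x"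
proof -
  obtain u v where "u \<in> B1 \<inter> B2" "v \<in> B1 \<inter> B2" "adj H u v" "is_biclique H B1"
    using assms(2) adj_KBe_iff[OF assms(1)] by blast
  then show ?thesis using biclique_edge_adj_any[of H B1 u v x] assms(3) that by blast
qed

lemma wf_graph_KBe:
  assumes "wf_graph H"
  shows "wf_graph (KBe H)"
proof -
  have "verts (KBe H) \<subseteq> Pow (verts H)"
    unfolding verts_KBe using biclique_subset_verts by blast
  then have "finite (verts (KBe H))" using finite_verts[OF assms] by (meson finite_Pow_iff finite_subset)
  moreover have "\<forall>e\<in>edges (KBe H). e \<subseteq> verts (KBe H) \<and> card e = 2"
    unfolding edges_KBe verts_KBe by (auto simp: card_2_iff)
  ultimately show ?thesis unfolding wf_graph_def by blast
qed

definition good_cycle :: "'a graph \<Rightarrow> nat \<Rightarrow> (nat \<Rightarrow> 'a) \<Rightarrow> bool" where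
  "good_cycle H n c \<longleftrightarrow> 5 \<le> n \<and> inj_on c {..<n} \<and> c ` {..<n} \<subseteq> verts H \<and>
     (\<forall>i<n. \<forall>j<n. adj H (c i) (c j) \<longleftrightarrow> (j = (i + 1) mod n \<or> i = (j + 1) mod n)) \<and>
     good_neighbours H n c"

lemma mod_succ_eq: "(i::nat) < n \<Longrightarrow> (i + 1) mod n = (if i + 1 = n then 0 else i + 1)"
  by (auto simp: mod_if)

lemma mod_pred_eq: "(i::nat) < n \<Longrightarrow> (i + n - 1) mod n = (if i = 0 then n - 1 else i - 1)"
  by (auto simp: mod_if)

lemma mod_pred_succ:
  fixes i n :: nat
  assumes "i < n" "3 \<le> n"
  shows "(i + n - 1) mod n < n" "(i + 1) mod n < n"
    "((i + n - 1) mod n + 1) mod n = i" "((i + 1) mod n + n - 1) mod n = i"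
    "(i + n - 1) mod n \<noteq> (i + 1) mod n" "(i + n - 1) mod n \<noteq> i" "(i + 1) mod n \<noteq> i"
  using assms mod_pred_eq[OF assms(1)] mod_succ_eq[OF assms(1)]
  by (auto simp: mod_if)

lemma good_cycle_length: "good_cycle H n c \<Longrightarrow> 5 \<le> n"
  unfolding good_cycle_def by blast

lemma good_cycle_vertex: "good_cycle H n c \<Longrightarrow> i < n \<Longrightarrow> c i \<in> verts H"
  unfolding good_cycle_def by blast

lemma good_cycle_eq_iff: "good_cycle H n c \<Longrightarrow> i < n \<Longrightarrow> j < n \<Longrightarrow> c i = c j \<longleftrightarrow> i = j"
  unfolding good_cycle_def by (metis inj_on_def lessThan_iff)

lemma good_cycle_adj_mod:
  "good_cycle H n c \<Longrightarrow> i < n \<Longrightarrow> j < n \<Longrightarrow>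
    adj H (c i) (c j) \<longleftrightarrow> (j = (i + 1) mod n \<or> i = (j + 1) mod n)"
  unfolding good_cycle_def by blast

lemma good_cycle_adj_iff:
  assumes "good_cycle H n c" "i < n" "j < n"
  shows "adj H (c i) (c j) \<longleftrightarrow>
    (j = i + 1 \<or> i = j + 1 \<or> (i = 0 \<and> j = n - 1) \<or> (j = 0 \<and> i = n - 1))"
  using good_cycle_adj_mod[OF assms] mod_succ_eq[OF assms(2)] mod_succ_eq[OF assms(3)] assms(2,3)
  by auto

lemma good_cycle_neighbours:
  assumes "good_cycle H n c" "i < n"
  shows "adj H (c i) (c ((i + n - 1) mod n))" "adj H (c i) (c ((i + 1) mod n))"
    "\<not> adj H (c ((i + n - 1) mod n)) (c ((i + 1) mod n))"
    "c ((i + n - 1) mod n) \<noteq> c ((i + 1) mod n)"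
    "c ((i + n - 1) mod n) \<noteq> c i" "c ((i + 1) mod n) \<noteq> c i"
proof -
  have n: "5 \<le> n" using good_cycle_length[OF assms(1)] .
  note I = mod_pred_succ[OF assms(2)]
  show "adj H (c i) (c ((i + n - 1) mod n))" "adj H (c i) (c ((i + 1) mod n))"
    using good_cycle_adj_mod[OF assms(1,2)] I n by auto
  show "\<not> adj H (c ((i + n - 1) mod n)) (c ((i + 1) mod n))"
    using good_cycle_adj_iff[OF assms(1) I(1,2)] mod_pred_eq[OF assms(2)] mod_succ_eq[OF assms(2)] n assms(2)
    by (auto split: if_splits)
  show "c ((i + n - 1) mod n) \<noteq> c ((i + 1) mod n)" "c ((i + n - 1) mod n) \<noteq> c i"
    "c ((i + 1) mod n) \<noteq> c i"
    using good_cycle_eq_iff[OF assms(1)] I n assms(2) by auto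
qed

lemma good_cycle_common_neighbour:
  assumes "good_cycle H n c" "i < n" "v \<in> verts H" "v \<noteq> c i"
    "adj H v (c ((i + n - 1) mod n))" "adj H v (c ((i + 1) mod n))"
  shows "adj H v (c i)"
proof (cases "v \<in> c ` {..<n}")
  case True
  then obtain k where k: "k < n" "v = c k" by blast
  have n: "5 \<le> n" using good_cycle_length[OF assms(1)] .
  note I = mod_pred_succ[OF assms(2)]
  have "k = i"
    using assms(5,6) k good_cycle_adj_iff[OF assms(1) k(1) I(1)] good_cycle_adj_iff[OF assms(1) k(1) I(2)]
      mod_pred_eq[OF assms(2)] mod_succ_eq[OF assms(2)] n assms(2)
    by (auto split: if_splits)
  then show ?thesis using assms(4) k by simp
next
  case False
  then show ?thesis using assms(1-3,5,6) unfolding good_cycle_def good_neighbours_def by blast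
qed

lemma good_cycle_adj_initial:
  assumes "good_cycle H n c" "k < n"
  shows "adj H (c k) (c 0) \<longleftrightarrow> k = 1 \<or> k = n - 1"
    "adj H (c k) (c 1) \<longleftrightarrow> k = 0 \<or> k = 2"
    "adj H (c k) (c 2) \<longleftrightarrow> k = 1 \<or> k = 3"
    "adj H (c k) (c 3) \<longleftrightarrow> k = 2 \<or> k = 4"
proof -
  have n: "5 \<le> n" using good_cycle_length[OF assms(1)] .
  then have "n - 1 \<noteq> 1" "n - 1 \<noteq> 2" "n - 1 \<noteq> 3" by linarith+
  with n show "adj H (c k) (c 0) \<longleftrightarrow> k = 1 \<or> k = n - 1"
    "adj H (c k) (c 1) \<longleftrightarrow> k = 0 \<or> k = 2"
    "adj H (c k) (c 2) \<longleftrightarrow> k = 1 \<or> k = 3"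
    "adj H (c k) (c 3) \<longleftrightarrow> k = 2 \<or> k = 4"
    using good_cycle_adj_iff[OF assms, of 0] good_cycle_adj_iff[OF assms, of 1]
      good_cycle_adj_iff[OF assms, of 2] good_cycle_adj_iff[OF assms, of 3] by auto
qed

section \<open>Stars along the cycle\<close>

lemma biclique_around_cycle_vertex_adj:
  assumes "wf_graph H" "good_cycle H n c" "is_biclique H B" "i < n"
    "{c ((i + n - 1) mod n), c i, c ((i + 1) mod n)} \<subseteq> B" "w \<in> B" "w \<noteq> c i"
  shows "adj H w (c i)"
proof (rule ccontr)
  assume not_adj: "\<not> adj H w (c i)"
  note N = good_cycle_neighbours[OF assms(2,4)]
  have "adj H w (c ((i + n - 1) mod n))" "adj H w (c ((i + 1) mod n))"
    using biclique_adj_parity[OF assms(3) assms(6), of "c i" "c ((i + n - 1) mod n)"]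
      biclique_adj_parity[OF assms(3) assms(6), of "c i" "c ((i + 1) mod n)"] assms(5) not_adj N(1,2)
    by auto
  moreover have "w \<in> verts H" using biclique_subset_verts[OF assms(3)] assms(6) by blast
  ultimately show False
    using good_cycle_common_neighbour[OF assms(2,4) _ assms(7)] not_adj by blast
qed

lemma biclique_around_cycle_vertex_edge:
  assumes "wf_graph H" "good_cycle H n c" "is_biclique H B" "i < n"
    "{c ((i + n - 1) mod n), c i, c ((i + 1) mod n)} \<subseteq> B" "u \<in> B" "v \<in> B" "adj H u v"
  shows "u = c i \<or> v = c i"
proof (rule ccontr)
  assume "\<not> (u = c i \<or> v = c i)"
  then have "adj H u (c i)" "adj H v (c i)"
    using biclique_around_cycle_vertex_adj[OF assms(1-5)] assms(6,7) by auto
  moreover have "c i \<in> B" using assms(5) by blast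
  ultimately show False
    using biclique_adj_parity[OF assms(3) assms(6) _ assms(7), of "c i"] assms(8) adj_commute by metis
qed

definition cycle_biclique :: "'a graph \<Rightarrow> nat \<Rightarrow> (nat \<Rightarrow> 'a) \<Rightarrow> nat \<Rightarrow> 'a set" where
  "cycle_biclique H n c i = biclique_containing H {c i, c ((i + n - 1) mod n), c ((i + 1) mod n)}"

lemma cycle_biclique:
  assumes "wf_graph H" "good_cycle H n c" "i < n"
  shows "is_biclique H (cycle_biclique H n c i)"
    "{c ((i + n - 1) mod n), c i, c ((i + 1) mod n)} \<subseteq> cycle_biclique H n c i"
  using biclique_containing_path3[OF assms(1) good_cycle_neighbours(1-4)[OF assms(2,3)]]
  unfolding cycle_biclique_def by blast+

lemma cycle_biclique_edge:
  assumes "wf_graph H" "good_cycle H n c" "i < n"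
    "u \<in> cycle_biclique H n c i" "v \<in> cycle_biclique H n c i" "adj H u v"
  shows "u = c i \<or> v = c i"
  using biclique_around_cycle_vertex_edge[OF assms(1,2) cycle_biclique(1)[OF assms(1-3)] assms(3)
      cycle_biclique(2)[OF assms(1-3)] assms(4-6)] .

lemma cycle_biclique_neighbour:
  assumes "wf_graph H" "good_cycle H n c" "i < n" "j < n" "adj H (c i) (c j)"
  shows "c j \<in> cycle_biclique H n c i"
proof -
  have "3 \<le> n" using good_cycle_length[OF assms(2)] by linarith
  then have "j = (i + 1) mod n \<or> j = (i + n - 1) mod n"
    using good_cycle_adj_mod[OF assms(2-4)] assms(5) mod_pred_succ(4)[OF assms(4)] by auto
  then show ?thesis using cycle_biclique(2)[OF assms(1-3)] by blast
qed

lemma cycle_biclique_centre: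
  assumes "wf_graph H" "good_cycle H n c" "i < n"
  shows "c i \<in> cycle_biclique H n c i"
  using cycle_biclique(2)[OF assms] by blast

lemma centre_mem_of_adj_cycle_biclique:
  assumes "wf_graph H" "good_cycle H n c" "i < n" "adj (KBe H) B (cycle_biclique H n c i)"
  shows "c i \<in> B"
proof -
  obtain u v where "u \<in> B" "v \<in> B" "u \<in> cycle_biclique H n c i" "v \<in> cycle_biclique H n c i"
    "adj H u v"
    using assms(4) adj_KBe_iff[OF assms(1)] by blast
  then show ?thesis using cycle_biclique_edge[OF assms(1-3)] by metis
qed

lemma cycle_biclique_inj:
  assumes "wf_graph H" "good_cycle H n c" "i < n" "j < n"
    "cycle_biclique H n c i = cycle_biclique H n c j"
  shows "i = j"
proof (rule ccontr)
  assume "i \<noteq> j"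
  have "3 \<le> n" using good_cycle_length[OF assms(2)] by linarith
  note I = mod_pred_succ[OF assms(3) this]
  note N = good_cycle_neighbours[OF assms(2,3)]
  note C = cycle_biclique(2)[OF assms(1-3), unfolded assms(5)]
  have "c ((i + n - 1) mod n) = c j \<or> c i = c j"
    using cycle_biclique_edge[OF assms(1,2,4), of "c ((i + n - 1) mod n)" "c i"] C
      N(1)[unfolded adj_commute[of H "c i"]] by blast
  moreover have "c i = c j \<or> c ((i + 1) mod n) = c j"
    using cycle_biclique_edge[OF assms(1,2,4), of "c i" "c ((i + 1) mod n)"] C N(2) by blast
  ultimately show False
    using good_cycle_eq_iff[OF assms(2)] I assms(3,4) \<open>i \<noteq> j\<close> by metis
qed

lemma adj_KBe_cycle_biclique_iff:
  assumes "wf_graph H" "good_cycle H n c" "i < n" "j < n"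
  shows "adj (KBe H) (cycle_biclique H n c i) (cycle_biclique H n c j) \<longleftrightarrow> adj H (c i) (c j)"
proof
  assume "adj (KBe H) (cycle_biclique H n c i) (cycle_biclique H n c j)"
  then obtain u v where uv: "u \<in> cycle_biclique H n c i" "v \<in> cycle_biclique H n c i"
    "u \<in> cycle_biclique H n c j" "v \<in> cycle_biclique H n c j" "adj H u v"
    "cycle_biclique H n c i \<noteq> cycle_biclique H n c j"
    using adj_KBe_iff[OF assms(1)] by blast
  have "c i \<noteq> c j" using uv(6) good_cycle_eq_iff[OF assms(2-4)] by auto
  moreover have "u = c i \<or> v = c i" "u = c j \<or> v = c j"
    using cycle_biclique_edge[OF assms(1,2,3) uv(1,2,5)] cycle_biclique_edge[OF assms(1,2,4) uv(3,4,5)]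
    by auto
  ultimately show "adj H (c i) (c j)" using uv(5) adj_commute by metis
next
  assume a: "adj H (c i) (c j)"
  then have "cycle_biclique H n c i \<noteq> cycle_biclique H n c j"
    using cycle_biclique_inj[OF assms] adj_irrefl[OF assms(1)] by blast
  moreover have "adj H (c j) (c i)" using a by (simp add: adj_commute)
  ultimately show "adj (KBe H) (cycle_biclique H n c i) (cycle_biclique H n c j)"
    using adj_KBeI[OF assms(1) cycle_biclique(1)[OF assms(1-3)] cycle_biclique(1)[OF assms(1,2,4)]]
      cycle_biclique_centre[OF assms(1-3)] cycle_biclique_centre[OF assms(1,2,4)]
      cycle_biclique_neighbour[OF assms a] cycle_biclique_neighbour[OF assms(1,2,4,3)] a
    by blast
qed

lemma good_neighbours_KBe:
  assumes "wf_graph H" "good_cycle H n c"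
  shows "good_neighbours (KBe H) n (cycle_biclique H n c)"
  unfolding good_neighbours_def
proof (intro ballI allI impI)
  fix B i
  assume B: "B \<in> verts (KBe H) - cycle_biclique H n c ` {..<n}" and i: "i < n"
    and adj_ps: "adj (KBe H) B (cycle_biclique H n c ((i + n - 1) mod n)) \<and>
      adj (KBe H) B (cycle_biclique H n c ((i + 1) mod n))"
  define p where "p = (i + n - 1) mod n"
  define s where "s = (i + 1) mod n"
  have "3 \<le> n" using good_cycle_length[OF assms(2)] by linarith
  note I = mod_pred_succ[OF i this, folded p_def s_def]
  have B_biclique: "is_biclique H B" and B_ne: "B \<noteq> cycle_biclique H n c i"
    using B i unfolding verts_KBe by auto
  have adj_p: "adj (KBe H) (cycle_biclique H n c p) B" "adj (KBe H) B (cycle_biclique H n c p)"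
    and adj_s: "adj (KBe H) B (cycle_biclique H n c s)"
    using adj_ps unfolding p_def s_def by (simp_all add: adj_commute)
  have cp: "c p \<in> B" using centre_mem_of_adj_cycle_biclique[OF assms I(1) adj_p(2)] .
  have cs: "c s \<in> B" using centre_mem_of_adj_cycle_biclique[OF assms I(2) adj_s] .
  obtain l where l: "l \<in> cycle_biclique H n c p" "l \<in> B" "adj H l (c p)"
    using adj_KBe_common_neighbour[OF assms(1) adj_p(1) cycle_biclique_centre[OF assms I(1)]] .
  have "\<not> adj H (c p) (c s)" using good_cycle_neighbours(3)[OF assms(2) i] unfolding p_def s_def .
  then have ls: "adj H l (c s)" using biclique_adj_parity[OF B_biclique l(2) cp cs] l(3) by blast
  show "adj (KBe H) B (cycle_biclique H n c i)"
  proof (cases "l = c i")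
    case True
    have "c p \<in> cycle_biclique H n c i" "c i \<in> cycle_biclique H n c i"
      using cycle_biclique(2)[OF assms i] unfolding p_def by auto
    then show ?thesis
      using adj_KBeI[OF assms(1) B_biclique cycle_biclique(1)[OF assms i] B_ne cp _ l(2)] l(3) True
      by (simp add: adj_commute)
  next
    case False
    have "c i \<in> cycle_biclique H n c p" using cycle_biclique(2)[OF assms I(1)] I(3) by auto
    moreover have "l \<noteq> c p" "c i \<noteq> c p"
      using l(3) adj_irrefl[OF assms(1)] good_cycle_neighbours(5)[OF assms(2) i] p_def by auto
    ultimately have "\<not> adj H l (c i)" using cycle_biclique_edge[OF assms I(1) l(1)] by blast
    moreover have "l \<in> verts H" using l(2) biclique_subset_verts[OF B_biclique] by blast
    ultimately show ?thesis
      using good_cycle_common_neighbour[OF assms(2) i _ False] l(3) ls p_def s_def by blast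
  qed
qed

lemma good_cycle_KBe:
  assumes "wf_graph H" "good_cycle H n c"
  shows "good_cycle (KBe H) n (cycle_biclique H n c)"
  unfolding good_cycle_def
proof (intro conjI)
  show "5 \<le> n" using good_cycle_length[OF assms(2)] .
  show "inj_on (cycle_biclique H n c) {..<n}"
    using cycle_biclique_inj[OF assms] by (meson inj_onI lessThan_iff)
  show "cycle_biclique H n c ` {..<n} \<subseteq> verts (KBe H)"
    unfolding verts_KBe using cycle_biclique(1)[OF assms] by blast
  show "\<forall>i<n. \<forall>j<n. adj (KBe H) (cycle_biclique H n c i) (cycle_biclique H n c j) \<longleftrightarrow>
      (j = (i + 1) mod n \<or> i = (j + 1) mod n)"
    using adj_KBe_cycle_biclique_iff[OF assms] good_cycle_adj_mod[OF assms(2)] by blast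
  show "good_neighbours (KBe H) n (cycle_biclique H n c)" using good_neighbours_KBe[OF assms] .
qed

section \<open>Ears\<close>

definition ear :: "'a graph \<Rightarrow> nat \<Rightarrow> (nat \<Rightarrow> 'a) \<Rightarrow> nat \<Rightarrow> nat \<Rightarrow> 'a \<Rightarrow> bool" where
  "ear H n c a b z \<longleftrightarrow> z \<in> verts H \<and> z \<notin> c ` {..<n} \<and> (\<forall>k<n. adj H z (c k) \<longleftrightarrow> k = a \<or> k = b)"

definition clique :: "'a graph \<Rightarrow> 'a set \<Rightarrow> bool" where
  "clique H Q \<longleftrightarrow> (\<forall>x\<in>Q. \<forall>y\<in>Q. x \<noteq> y \<longrightarrow> adj H x y)"

lemma ear_adj_iff:
  assumes "ear H n c a b z" "k < n"
  shows "adj H z (c k) \<longleftrightarrow> k = a \<or> k = b" "adj H (c k) z \<longleftrightarrow> k = a \<or> k = b"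
  using assms unfolding ear_def by (simp_all add: adj_commute)

lemma ear_neq_cycle: "ear H n c a b z \<Longrightarrow> k < n \<Longrightarrow> z \<noteq> c k"
  unfolding ear_def by blast

lemma ear_in_verts: "ear H n c a b z \<Longrightarrow> z \<in> verts H"
  unfolding ear_def by blast

(* c i and z lie on one side of B and c j on the other; the conclusion says on which side
   a further cycle vertex of B lies. *)
lemma biclique_cycle_edge_ear_sides:
  assumes "is_biclique H B" "ear H n c a b z" "z \<in> B" "i < n" "j < n" "c i \<in> B" "c j \<in> B"
    "adj H (c i) (c j)" "j = a \<or> j = b" "\<not> (i = a \<or> i = b)" "k < n" "c k \<in> B"
  shows "(adj H (c k) (c i) \<and> (k = a \<or> k = b)) \<or>
    (adj H (c k) (c j) \<and> \<not> adj H (c k) (c i) \<and> k \<noteq> a \<and> k \<noteq> b)"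
  using biclique_adj_parity[OF assms(1) assms(12) assms(6) assms(7)]
    biclique_adj_parity[OF assms(1) assms(12) assms(6) assms(3)]
    ear_adj_iff[OF assms(2) assms(4)] ear_adj_iff[OF assms(2) assms(11)] assms(8-10)
  by blast

lemma ear_KBe:
  assumes "wf_graph H" "good_cycle H n c" "b = a + 1" "b < n" "is_biclique H B" "c a \<in> B" "c b \<in> B"
    "\<forall>k<n. c k \<in> B \<longrightarrow> k = a \<or> k = b"
  shows "ear (KBe H) n (cycle_biclique H n c) a b B"
proof -
  have n: "3 \<le> n" using good_cycle_length[OF assms(2)] by linarith
  have not_cb: "B \<noteq> cycle_biclique H n c k" if k: "k < n" for k
  proof
    assume "B = cycle_biclique H n c k"
    then have "(k + n - 1) mod n \<in> {a, b}" "k \<in> {a, b}" "(k + 1) mod n \<in> {a, b}"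
      using cycle_biclique(2)[OF assms(1,2) k] assms(8) mod_pred_succ[OF k n] k by auto
    then show False using mod_pred_succ[OF k n] assms(3) by auto
  qed
  have edge: "adj H (c a) (c b)" "adj H (c b) (c a)"
    using good_cycle_adj_iff[OF assms(2)] assms(3,4) by simp_all
  have "adj (KBe H) B (cycle_biclique H n c k) \<longleftrightarrow> k = a \<or> k = b" if k: "k < n" for k
  proof
    assume "adj (KBe H) B (cycle_biclique H n c k)"
    then show "k = a \<or> k = b"
      using centre_mem_of_adj_cycle_biclique[OF assms(1,2) k] assms(8) k by blast
  next
    assume "k = a \<or> k = b"
    then have "c a \<in> cycle_biclique H n c k" "c b \<in> cycle_biclique H n c k"
      using edge cycle_biclique_centre[OF assms(1,2) k]
        cycle_biclique_neighbour[OF assms(1,2) k, of a] cycle_biclique_neighbour[OF assms(1,2) k, of b]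
        assms(3,4) by auto
    then show "adj (KBe H) B (cycle_biclique H n c k)"
      using adj_KBeI[OF assms(1,5) cycle_biclique(1)[OF assms(1,2) k] not_cb[OF k]] assms(6,7) edge(1)
      by blast
  qed
  moreover have "B \<in> verts (KBe H)" "B \<notin> cycle_biclique H n c ` {..<n}"
    unfolding verts_KBe using assms(5) not_cb by auto
  ultimately show ?thesis unfolding ear_def by blast
qed

section \<open>Two steps of the operator\<close>

lemma biclique_triangle_free:
  assumes "is_biclique H B" "x \<in> B" "y \<in> B" "z \<in> B" "adj H x y" "adj H y z"
  shows "\<not> adj H x z"
  using biclique_adj_parity[OF assms(1-4)] assms(5,6) by blast

lemma inj_on_bicliques_through_vertex:
  assumes "clique H Q" "\<And>z. z \<in> Q \<Longrightarrow> is_biclique H (f z) \<and> z \<in> f z \<and> m \<in> f z \<and> adj H z m"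
  shows "inj_on f Q"
proof (rule inj_onI, rule ccontr)
  fix z z' assume z: "z \<in> Q" "z' \<in> Q" "f z = f z'" "z \<noteq> z'"
  then have "adj H z z'" using assms(1) unfolding clique_def by blast
  moreover have "adj H z' m" "z' \<in> f z" using assms(2)[OF z(2)] z(3) by auto
  ultimately show False
    using biclique_triangle_free[of H "f z" z z' m] assms(2)[OF z(1)] by blast
qed

lemma clique_KBe_common_edge:
  assumes "wf_graph H" "adj H u v" "\<And>X. X \<in> \<X> \<Longrightarrow> is_biclique H X \<and> u \<in> X \<and> v \<in> X"
  shows "clique (KBe H) \<X>"
  unfolding clique_def using adj_KBeI[OF assms(1)] assms(2,3) by metis

lemma good_cycle_common_neighbour_small:
  assumes "good_cycle H n c" "v \<in> verts H" "v \<notin> c ` {..<n}"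
  shows "adj H v (c 0) \<Longrightarrow> adj H v (c 2) \<Longrightarrow> adj H v (c 1)"
    "adj H v (c 1) \<Longrightarrow> adj H v (c 3) \<Longrightarrow> adj H v (c 2)"
proof -
  have n: "5 \<le> n" using good_cycle_length[OF assms(1)] .
  have idx: "(1 + n - 1) mod n = 0" "(1 + 1) mod n = 2" "(2 + n - 1) mod n = 1" "(2 + 1) mod n = 3"
    using n by (auto simp: mod_if)
  have "(1::nat) < n" "(2::nat) < n" "v \<noteq> c 1" "v \<noteq> c 2" using assms(3) n by auto
  from good_cycle_common_neighbour[OF assms(1) this(1) assms(2) this(3)]
    good_cycle_common_neighbour[OF assms(1) this(2) assms(2) this(4)]
  show "adj H v (c 0) \<Longrightarrow> adj H v (c 2) \<Longrightarrow> adj H v (c 1)"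
    "adj H v (c 1) \<Longrightarrow> adj H v (c 3) \<Longrightarrow> adj H v (c 2)"
    unfolding idx by simp_all
qed

(* The extra invariant that keeps the two flanking ear cliques built from Q non-adjacent. *)
definition unbridged :: "'a graph \<Rightarrow> (nat \<Rightarrow> 'a) \<Rightarrow> 'a set \<Rightarrow> bool" where
  "unbridged H c Q \<longleftrightarrow> (\<forall>p\<in>verts H. \<forall>z\<in>Q. adj H p z \<longrightarrow> adj H p (c 0) \<longrightarrow> adj H p (c 3) \<longrightarrow>
      adj H p (c 1) \<or> adj H p (c 2))"

lemma flank_bicliques_not_adj:
  assumes "wf_graph H" "good_cycle H n c" "ear H n c 1 2 z" "unbridged H c Q" "z \<in> Q"
    "is_biclique H L" "c 0 \<in> L" "c 1 \<in> L" "z \<in> L" "\<forall>k<n. c k \<in> L \<longrightarrow> k = 0 \<or> k = 1"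
    "is_biclique H R" "c 2 \<in> R" "c 3 \<in> R" "\<forall>k<n. c k \<in> R \<longrightarrow> k = 2 \<or> k = 3"
  shows "\<not> adj (KBe H) L R"
proof
  assume "adj (KBe H) L R"
  then have "adj (KBe H) R L" by (simp add: adj_commute)
  then obtain w where w: "w \<in> R" "w \<in> L" "adj H w (c 3)"
    using adj_KBe_common_neighbour[OF assms(1) _ assms(13)] by blast
  have n: "5 \<le> n" using good_cycle_length[OF assms(2)] .
  note T = good_cycle_adj_initial[OF assms(2)]
  have w_verts: "w \<in> verts H" using w(1) biclique_subset_verts[OF assms(11)] by blast
  have w_off: "w \<notin> c ` {..<n}" using w(1,2) assms(10,14) by force
  have "\<not> adj H w (c 2)"
    using biclique_triangle_free[OF assms(11) w(1) assms(13,12)] w(3) T(3)[of 3] n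
    by (simp add: adj_commute)
  then have w1: "\<not> adj H w (c 1)"
    using good_cycle_common_neighbour_small(2)[OF assms(2) w_verts w_off] w(3) by blast
  have "adj H w (c 0)"
    using biclique_adj_parity[OF assms(6) w(2) assms(8,7)] w1 T(1)[of 1] n by auto
  moreover have "adj H w z"
    using biclique_adj_parity[OF assms(6) w(2) assms(8,9)] w1 ear_adj_iff(2)[OF assms(3), of 1] n
    by auto
  ultimately show False
    using assms(4,5) w_verts w(3) w1 \<open>\<not> adj H w (c 2)\<close> unfolding unbridged_def by blast
qed

lemma middle_biclique_unbridged_KBe:
  assumes "wf_graph H" "good_cycle H n c" "is_biclique H Z" "c 1 \<in> Z" "c 2 \<in> Z"
    "\<forall>k<n. c k \<in> Z \<longrightarrow> k = 1 \<or> k = 2"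
    "adj (KBe H) p Z" "adj (KBe H) p (cycle_biclique H n c 0)" "adj (KBe H) p (cycle_biclique H n c 3)"
  shows "adj (KBe H) p (cycle_biclique H n c 1) \<or> adj (KBe H) p (cycle_biclique H n c 2)"
proof (rule ccontr)
  assume not_12: "\<not> ?thesis"
  have n: "5 \<le> n" using good_cycle_length[OF assms(2)] .
  then have idx: "0 < n" "1 < n" "2 < n" "3 < n" by auto
  note T = good_cycle_adj_initial[OF assms(2)]
  have e01: "adj H (c 0) (c 1)" and e23: "adj H (c 2) (c 3)" using T n by auto
  have p_biclique: "is_biclique H p" using assms(7) adj_KBe_iff[OF assms(1)] by blast
  have c0: "c 0 \<in> p" and c3: "c 3 \<in> p"
    using centre_mem_of_adj_cycle_biclique[OF assms(1,2)] idx assms(8,9) by blast+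
  have not_adj: "\<not> adj (KBe H) (cycle_biclique H n c 1) (cycle_biclique H n c 3)"
    "\<not> adj (KBe H) (cycle_biclique H n c 2) (cycle_biclique H n c 0)"
    using adj_KBe_cycle_biclique_iff[OF assms(1,2)] T idx n by auto
  have "c 1 \<notin> p"
  proof
    assume "c 1 \<in> p"
    moreover have "p \<noteq> cycle_biclique H n c 1" using assms(9) not_adj(1) by blast
    moreover have "c 0 \<in> cycle_biclique H n c 1" "c 1 \<in> cycle_biclique H n c 1"
      using cycle_biclique_neighbour[OF assms(1,2) idx(2,1)] cycle_biclique_centre[OF assms(1,2) idx(2)]
        e01 by (simp_all add: adj_commute)
    ultimately show False
      using adj_KBeI[OF assms(1) p_biclique cycle_biclique(1)[OF assms(1,2) idx(2)]] c0 e01 not_12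
      by blast
  qed
  have "c 2 \<notin> p"
  proof
    assume "c 2 \<in> p"
    moreover have "p \<noteq> cycle_biclique H n c 2" using assms(8) not_adj(2) by blast
    moreover have "c 2 \<in> cycle_biclique H n c 2" "c 3 \<in> cycle_biclique H n c 2"
      using cycle_biclique_neighbour[OF assms(1,2) idx(3,4)] cycle_biclique_centre[OF assms(1,2) idx(3)]
        e23 by simp_all
    ultimately show False
      using adj_KBeI[OF assms(1) p_biclique cycle_biclique(1)[OF assms(1,2) idx(3)]] c3 e23 not_12
      by blast
  qed
  obtain w where w: "w \<in> p" "w \<in> Z" "adj H w (c 0)"
    using adj_KBe_common_neighbour[OF assms(1,7) c0] .
  have w_off: "w \<notin> c ` {..<n}" using w(1,2) assms(6) \<open>c 1 \<notin> p\<close> \<open>c 2 \<notin> p\<close> by force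
  have w_verts: "w \<in> verts H" using w(1) biclique_subset_verts[OF p_biclique] by blast
  have "adj H w (c 3)"
    using biclique_adj_parity[OF p_biclique w(1) c0 c3] w(3) T(4)[of 0] n by auto
  moreover have "adj H w (c 2) \<longleftrightarrow> \<not> adj H w (c 1)"
    using biclique_adj_parity[OF assms(3) w(2) assms(4,5)] T(3)[of 1] n by auto
  ultimately show False
    using good_cycle_common_neighbour_small[OF assms(2) w_verts w_off] w(3) by blast
qed

lemma middle_ear_star_at_1:
  assumes "wf_graph H" "good_cycle H n c" "ear H n c 1 2 z"
  shows "is_biclique H (biclique_containing H {c 1, c 0, z})"
    "{c 1, c 0, z} \<subseteq> biclique_containing H {c 1, c 0, z}"
    "\<forall>k<n. c k \<in> biclique_containing H {c 1, c 0, z} \<longrightarrow> k = 0 \<or> k = 1"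
proof -
  have n: "5 \<le> n" using good_cycle_length[OF assms(2)] .
  note T = good_cycle_adj_initial[OF assms(2)]
  have e: "adj H (c 1) (c 0)" "adj H (c 0) (c 1)" using T n by auto
  have "adj H (c 1) z" "\<not> adj H (c 0) z" "c 0 \<noteq> z"
    using ear_adj_iff[OF assms(3)] ear_neq_cycle[OF assms(3), of 0] n by auto
  note S = biclique_containing_path3[OF assms(1) e(1) this]
  show "is_biclique H (biclique_containing H {c 1, c 0, z})"
    "{c 1, c 0, z} \<subseteq> biclique_containing H {c 1, c 0, z}" by (fact S)+
  show "\<forall>k<n. c k \<in> biclique_containing H {c 1, c 0, z} \<longrightarrow> k = 0 \<or> k = 1"
    using biclique_cycle_edge_ear_sides[OF S(1) assms(3), of 0 1] S(2) e(2) T(1,2) n by fastforce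
qed

lemma middle_ear_star_at_2:
  assumes "wf_graph H" "good_cycle H n c" "ear H n c 1 2 z"
  shows "is_biclique H (biclique_containing H {c 2, z, c 3})"
    "{c 2, z, c 3} \<subseteq> biclique_containing H {c 2, z, c 3}"
    "\<forall>k<n. c k \<in> biclique_containing H {c 2, z, c 3} \<longrightarrow> k = 2 \<or> k = 3"
proof -
  have n: "5 \<le> n" using good_cycle_length[OF assms(2)] .
  note T = good_cycle_adj_initial[OF assms(2)]
  have e: "adj H (c 2) (c 3)" using T n by auto
  have "adj H (c 2) z" "\<not> adj H z (c 3)" "z \<noteq> c 3"
    using ear_adj_iff[OF assms(3)] ear_neq_cycle[OF assms(3), of 3] n by auto
  note S = biclique_containing_path3[OF assms(1) this(1) e this(2,3)]
  show "is_biclique H (biclique_containing H {c 2, z, c 3})"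
    "{c 2, z, c 3} \<subseteq> biclique_containing H {c 2, z, c 3}" by (fact S)+
  show "\<forall>k<n. c k \<in> biclique_containing H {c 2, z, c 3} \<longrightarrow> k = 2 \<or> k = 3"
    using biclique_cycle_edge_ear_sides[OF S(1) assms(3), of 3 2] S(2) e T(3,4) n
    by (fastforce simp: adj_commute)
qed

lemma flank_ear_star_at_1:
  assumes "wf_graph H" "good_cycle H n c" "ear H n c 0 1 a"
  shows "is_biclique H (biclique_containing H {c 1, a, c 2})"
    "{c 1, a, c 2} \<subseteq> biclique_containing H {c 1, a, c 2}"
    "\<forall>k<n. c k \<in> biclique_containing H {c 1, a, c 2} \<longrightarrow> k = 1 \<or> k = 2"
proof -
  have n: "5 \<le> n" using good_cycle_length[OF assms(2)] .
  note T = good_cycle_adj_initial[OF assms(2)]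
  have e: "adj H (c 1) (c 2)" "adj H (c 2) (c 1)" using T n by auto
  have "adj H (c 1) a" "\<not> adj H a (c 2)" "a \<noteq> c 2"
    using ear_adj_iff[OF assms(3)] ear_neq_cycle[OF assms(3), of 2] n by auto
  note S = biclique_containing_path3[OF assms(1) this(1) e(1) this(2,3)]
  show "is_biclique H (biclique_containing H {c 1, a, c 2})"
    "{c 1, a, c 2} \<subseteq> biclique_containing H {c 1, a, c 2}" by (fact S)+
  show "\<forall>k<n. c k \<in> biclique_containing H {c 1, a, c 2} \<longrightarrow> k = 1 \<or> k = 2"
    using biclique_cycle_edge_ear_sides[OF S(1) assms(3), of 2 1] S(2) e(2) T(2,3) n by fastforce
qed

lemma flank_ear_star_at_2:
  assumes "wf_graph H" "good_cycle H n c" "ear H n c 2 3 b"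
  shows "is_biclique H (biclique_containing H {c 2, c 1, b})"
    "{c 2, c 1, b} \<subseteq> biclique_containing H {c 2, c 1, b}"
    "\<forall>k<n. c k \<in> biclique_containing H {c 2, c 1, b} \<longrightarrow> k = 1 \<or> k = 2"
proof -
  have n: "5 \<le> n" using good_cycle_length[OF assms(2)] .
  note T = good_cycle_adj_initial[OF assms(2)]
  have e: "adj H (c 1) (c 2)" "adj H (c 2) (c 1)" using T n by auto
  have "adj H (c 2) b" "\<not> adj H (c 1) b" "c 1 \<noteq> b"
    using ear_adj_iff[OF assms(3)] ear_neq_cycle[OF assms(3), of 1] n by auto
  note S = biclique_containing_path3[OF assms(1) e(2) this]
  show "is_biclique H (biclique_containing H {c 2, c 1, b})"
    "{c 2, c 1, b} \<subseteq> biclique_containing H {c 2, c 1, b}" by (fact S)+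
  show "\<forall>k<n. c k \<in> biclique_containing H {c 2, c 1, b} \<longrightarrow> k = 1 \<or> k = 2"
    using biclique_cycle_edge_ear_sides[OF S(1) assms(3), of 1 2] S(2) e(1) T(2,3) n by fastforce
qed

lemma flank_ear_cliques_KBe:
  assumes "wf_graph H" "good_cycle H n c" "Q \<subseteq> {z. ear H n c 1 2 z}" "clique H Q" "unbridged H c Q"
  obtains A B where "A \<subseteq> {z. ear (KBe H) n (cycle_biclique H n c) 0 1 z}"
    "B \<subseteq> {z. ear (KBe H) n (cycle_biclique H n c) 2 3 z}" "clique (KBe H) A" "clique (KBe H) B"
    "\<forall>a\<in>A. \<forall>b\<in>B. \<not> adj (KBe H) a b" "card A = card Q" "card B = card Q"
proof -
  have n: "5 \<le> n" using good_cycle_length[OF assms(2)] .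
  have e: "adj H (c 0) (c 1)" "adj H (c 2) (c 3)" using good_cycle_adj_initial[OF assms(2)] n by auto
  have ear_z: "ear H n c 1 2 z" if "z \<in> Q" for z using assms(3) that by blast
  have z: "adj H z (c 1)" "adj H z (c 2)" if "z \<in> Q" for z using ear_adj_iff[OF ear_z[OF that]] n by auto
  define L where "L z = biclique_containing H {c 1, c 0, z}" for z
  define R where "R z = biclique_containing H {c 2, z, c 3}" for z
  note L = middle_ear_star_at_1[OF assms(1,2) ear_z, folded L_def]
  note R = middle_ear_star_at_2[OF assms(1,2) ear_z, folded R_def]
  show ?thesis
  proof
    show "L ` Q \<subseteq> {z. ear (KBe H) n (cycle_biclique H n c) 0 1 z}"
    proof
      fix X assume "X \<in> L ` Q"
      then obtain z where "z \<in> Q" "X = L z" by blast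
      then show "X \<in> {z. ear (KBe H) n (cycle_biclique H n c) 0 1 z}"
        using ear_KBe[OF assms(1,2) _ _ L(1), of 1 0 z] L(2,3) n by auto
    qed
    show "R ` Q \<subseteq> {z. ear (KBe H) n (cycle_biclique H n c) 2 3 z}"
    proof
      fix X assume "X \<in> R ` Q"
      then obtain z where "z \<in> Q" "X = R z" by blast
      then show "X \<in> {z. ear (KBe H) n (cycle_biclique H n c) 2 3 z}"
        using ear_KBe[OF assms(1,2) _ _ R(1), of 3 2 z] R(2,3) n by auto
    qed
    show "clique (KBe H) (L ` Q)"
      by (rule clique_KBe_common_edge[OF assms(1) e(1)]) (use L in auto)
    show "clique (KBe H) (R ` Q)"
      by (rule clique_KBe_common_edge[OF assms(1) e(2)]) (use R in auto)
    show "\<forall>X\<in>L ` Q. \<forall>Y\<in>R ` Q. \<not> adj (KBe H) X Y"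
    proof (intro ballI)
      fix X Y assume "X \<in> L ` Q" "Y \<in> R ` Q"
      then obtain z y where zy: "z \<in> Q" "y \<in> Q" "X = L z" "Y = R y" by blast
      show "\<not> adj (KBe H) X Y"
        using flank_bicliques_not_adj[OF assms(1,2) ear_z[OF zy(1)] assms(5) zy(1) L(1)[OF zy(1)]
            _ _ _ L(3)[OF zy(1)] R(1)[OF zy(2)] _ _ R(3)[OF zy(2)]]
          L(2)[OF zy(1)] R(2)[OF zy(2)] zy(3,4) by auto
    qed
    have "inj_on L Q" by (rule inj_on_bicliques_through_vertex[OF assms(4)]) (use L z(1) in auto)
    then show "card (L ` Q) = card Q" by (rule card_image)
    have "inj_on R Q" by (rule inj_on_bicliques_through_vertex[OF assms(4)]) (use R z(2) in auto)
    then show "card (R ` Q) = card Q" by (rule card_image)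
  qed
qed

lemma middle_ear_clique_KBe:
  assumes "wf_graph H" "good_cycle H n c" "A \<subseteq> {z. ear H n c 0 1 z}" "B \<subseteq> {z. ear H n c 2 3 z}"
    "clique H A" "clique H B" "\<forall>a\<in>A. \<forall>b\<in>B. \<not> adj H a b"
  obtains Q where "Q \<subseteq> {z. ear (KBe H) n (cycle_biclique H n c) 1 2 z}" "clique (KBe H) Q"
    "unbridged (KBe H) (cycle_biclique H n c) Q" "card Q = card A + card B"
proof -
  have n: "5 \<le> n" using good_cycle_length[OF assms(2)] .
  have e: "adj H (c 1) (c 2)" using good_cycle_adj_initial[OF assms(2)] n by auto
  have ear_a: "ear H n c 0 1 a" if "a \<in> A" for a using assms(3) that by blast
  have ear_b: "ear H n c 2 3 b" if "b \<in> B" for b using assms(4) that by blast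
  have a: "adj H a (c 1)" if "a \<in> A" for a using ear_adj_iff[OF ear_a[OF that]] n by auto
  have b: "adj H b (c 2)" "\<not> adj H (c 1) b" if "b \<in> B" for b
    using ear_adj_iff[OF ear_b[OF that]] n by auto
  define R where "R a = biclique_containing H {c 1, a, c 2}" for a
  define L where "L b = biclique_containing H {c 2, c 1, b}" for b
  note R = flank_ear_star_at_1[OF assms(1,2) ear_a, folded R_def]
  note L = flank_ear_star_at_2[OF assms(1,2) ear_b, folded L_def]
  define Q where "Q = R ` A \<union> L ` B"
  have Q: "is_biclique H X \<and> c 1 \<in> X \<and> c 2 \<in> X \<and> (\<forall>k<n. c k \<in> X \<longrightarrow> k = 1 \<or> k = 2)"
    if "X \<in> Q" for X
  proof -
    from that consider a where "a \<in> A" "X = R a" | b where "b \<in> B" "X = L b"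
      unfolding Q_def by blast
    then show ?thesis
    proof cases
      case (1 a)
      then show ?thesis using R[OF 1(1)] by simp
    next
      case (2 b)
      then show ?thesis using L[OF 2(1)] by simp
    qed
  qed
  have disjoint: "R ` A \<inter> L ` B = {}"
  proof (rule ccontr)
    assume "R ` A \<inter> L ` B \<noteq> {}"
    then obtain x y where xy: "x \<in> A" "y \<in> B" "R x = L y" by blast
    then have "y \<in> R x" using L(2)[OF xy(2)] by simp
    then have "adj H x y"
      using biclique_adj_parity[OF R(1)[OF xy(1)], of x "c 1" y] R(2)[OF xy(1)] a[OF xy(1)]
        b(2)[OF xy(2)] by simp
    then show False using assms(7) xy by blast
  qed
  have "A \<subseteq> verts H" "B \<subseteq> verts H"
    using assms(3,4) ear_in_verts[of H n c 0 1] ear_in_verts[of H n c 2 3] by blast+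
  then have "finite A" "finite B" using finite_verts[OF assms(1)] finite_subset by auto
  moreover have "inj_on R A" by (rule inj_on_bicliques_through_vertex[OF assms(5)]) (use R a in auto)
  moreover have "inj_on L B" by (rule inj_on_bicliques_through_vertex[OF assms(6)]) (use L b(1) in auto)
  ultimately have "card Q = card A + card B"
    unfolding Q_def using card_Un_disjoint[OF _ _ disjoint] card_image[of R A] card_image[of L B]
    by simp
  show ?thesis
  proof
    show "Q \<subseteq> {z. ear (KBe H) n (cycle_biclique H n c) 1 2 z}"
    proof
      fix X assume "X \<in> Q"
      then show "X \<in> {z. ear (KBe H) n (cycle_biclique H n c) 1 2 z}"
        using ear_KBe[OF assms(1,2), of 2 1 X] Q n by auto
    qed
    show "clique (KBe H) Q" by (rule clique_KBe_common_edge[OF assms(1) e]) (use Q in blast)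
    show "unbridged (KBe H) (cycle_biclique H n c) Q"
      unfolding unbridged_def
    proof (intro ballI impI)
      fix p X assume "X \<in> Q" "adj (KBe H) p X" "adj (KBe H) p (cycle_biclique H n c 0)"
        "adj (KBe H) p (cycle_biclique H n c 3)"
      then show "adj (KBe H) p (cycle_biclique H n c 1) \<or> adj (KBe H) p (cycle_biclique H n c 2)"
        using middle_biclique_unbridged_KBe[OF assms(1,2), of X p] Q by blast
    qed
  qed fact
qed

section \<open>Relabelling\<close>

(* KBe_iter renumbers the vertices after each step, so the invariants have to be carried
   along injective relabellings. *)
definition graph_image :: "('a \<Rightarrow> 'b) \<Rightarrow> 'a graph \<Rightarrow> 'b graph" where
  "graph_image f H = (f ` verts H, (\<lambda>e. f ` e) ` edges H)"

lemma verts_graph_image: "verts (graph_image f H) = f ` verts H"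
  unfolding graph_image_def verts_def by simp

lemma relabel_eq_graph_image:
  assumes "finite (verts H)"
  obtains f where "inj_on f (verts H)" "relabel H = graph_image f H"
proof -
  let ?f = "SOME f. bij_betw f (verts H) {..<card (verts H)}"
  have "\<exists>f. bij_betw f (verts H) {..<card (verts H)}"
    using ex_bij_betw_finite_nat[OF assms] by (simp add: atLeast0LessThan)
  then have "bij_betw ?f (verts H) {..<card (verts H)}" by (rule someI_ex)
  then have "inj_on ?f (verts H)" by (rule bij_betw_imp_inj_on)
  moreover have "relabel H = graph_image ?f H" unfolding relabel_def graph_image_def Let_def by simp
  ultimately show ?thesis using that by blast
qed

lemma adj_graph_image_iff:
  assumes "wf_graph H" "inj_on f (verts H)" "u \<in> verts H" "v \<in> verts H"
  shows "adj (graph_image f H) (f u) (f v) \<longleftrightarrow> adj H u v"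
proof
  assume "adj (graph_image f H) (f u) (f v)"
  then have "{f u, f v} \<in> (\<lambda>e. f ` e) ` edges H" unfolding adj_def graph_image_def edges_def by simp
  then obtain e where e: "e \<in> edges H" "f ` e = f ` {u, v}" by auto
  moreover have "e \<subseteq> verts H" using e(1) assms(1) unfolding wf_graph_def by blast
  moreover have "{u, v} \<subseteq> verts H" using assms(3,4) by blast
  ultimately have "e = {u, v}" using inj_on_image_eq_iff[OF assms(2)] by blast
  then show "adj H u v" unfolding adj_def using e(1) by simp
next
  assume "adj H u v"
  then have "f ` {u, v} \<in> (\<lambda>e. f ` e) ` edges H" unfolding adj_def by blast
  then show "adj (graph_image f H) (f u) (f v)" unfolding adj_def graph_image_def edges_def by simp
qed

lemma wf_graph_image:
  assumes "wf_graph H" "inj_on f (verts H)"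
  shows "wf_graph (graph_image f H)"
proof -
  have "e' \<subseteq> verts (graph_image f H) \<and> card e' = 2" if e': "e' \<in> edges (graph_image f H)" for e'
  proof -
    obtain e where e: "e \<in> edges H" "e' = f ` e" using e' unfolding graph_image_def edges_def by auto
    have "e \<subseteq> verts H" "card e = 2" using e(1) assms(1) unfolding wf_graph_def by blast+
    then show ?thesis
      using card_image[OF inj_on_subset[OF assms(2)]] e(2) unfolding verts_graph_image by auto
  qed
  moreover have "finite (verts (graph_image f H))"
    unfolding verts_graph_image using finite_verts[OF assms(1)] by blast
  ultimately show ?thesis unfolding wf_graph_def by blast
qed

lemma good_cycle_graph_image:
  assumes "wf_graph H" "inj_on f (verts H)" "good_cycle H n c"
  shows "good_cycle (graph_image f H) n (f \<circ> c)"
proof -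
  have cv: "c i \<in> verts H" if "i < n" for i using good_cycle_vertex[OF assms(3) that] .
  note adj_f = adj_graph_image_iff[OF assms(1,2)]
  have n: "3 \<le> n" using good_cycle_length[OF assms(3)] by linarith
  have "c ` {..<n} \<subseteq> verts H" using cv by blast
  then have inj: "inj_on (f \<circ> c) {..<n}"
    using comp_inj_on[of c "{..<n}" f] inj_on_subset[OF assms(2)] assms(3) unfolding good_cycle_def
    by blast
  have good: "good_neighbours (graph_image f H) n (f \<circ> c)" unfolding good_neighbours_def
  proof (intro ballI allI impI)
    fix v i assume v: "v \<in> verts (graph_image f H) - (f \<circ> c) ` {..<n}" and i: "i < n"
      and a: "adj (graph_image f H) v ((f \<circ> c) ((i + n - 1) mod n)) \<and>
        adj (graph_image f H) v ((f \<circ> c) ((i + 1) mod n))"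
    obtain w where w: "w \<in> verts H" "v = f w" using v unfolding verts_graph_image by blast
    note I = mod_pred_succ[OF i n]
    have "adj H w (c ((i + n - 1) mod n))" "adj H w (c ((i + 1) mod n))"
      using a w adj_f[OF w(1) cv[OF I(1)]] adj_f[OF w(1) cv[OF I(2)]] by auto
    moreover have "w \<noteq> c i" using v w i by auto
    ultimately have "adj H w (c i)" using good_cycle_common_neighbour[OF assms(3) i w(1)] by blast
    then show "adj (graph_image f H) v ((f \<circ> c) i)" using adj_f[OF w(1) cv[OF i]] w by simp
  qed
  have "\<forall>i<n. \<forall>j<n. adj (graph_image f H) ((f \<circ> c) i) ((f \<circ> c) j) \<longleftrightarrow>
      (j = (i + 1) mod n \<or> i = (j + 1) mod n)"
    using adj_f cv good_cycle_adj_mod[OF assms(3)] by simp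
  moreover have "(f \<circ> c) ` {..<n} \<subseteq> verts (graph_image f H)"
    unfolding verts_graph_image using cv by auto
  ultimately show ?thesis
    unfolding good_cycle_def using inj good good_cycle_length[OF assms(3)] by blast
qed

lemma ear_graph_image:
  assumes "wf_graph H" "inj_on f (verts H)" "good_cycle H n c" "ear H n c a b z"
  shows "ear (graph_image f H) n (f \<circ> c) a b (f z)"
proof -
  have cv: "c k \<in> verts H" if "k < n" for k using good_cycle_vertex[OF assms(3) that] .
  have z: "z \<in> verts H" "z \<notin> c ` {..<n}" using assms(4) unfolding ear_def by blast+
  then have "f z \<notin> (f \<circ> c) ` {..<n}" using inj_onD[OF assms(2)] cv by fastforce
  then show ?thesis
    using z adj_graph_image_iff[OF assms(1,2) z(1) cv] assms(4)
    unfolding ear_def verts_graph_image by simp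
qed

lemma clique_graph_image:
  assumes "wf_graph H" "inj_on f (verts H)" "Q \<subseteq> verts H" "clique H Q"
  shows "clique (graph_image f H) (f ` Q)"
  unfolding clique_def
proof (intro ballI impI)
  fix x y assume "x \<in> f ` Q" "y \<in> f ` Q" "x \<noteq> y"
  then obtain u v where uv: "u \<in> Q" "v \<in> Q" "x = f u" "y = f v" "u \<noteq> v" by blast
  then have "adj H u v" using assms(4) unfolding clique_def by blast
  then show "adj (graph_image f H) x y" using adj_graph_image_iff[OF assms(1,2)] uv assms(3) by blast
qed

lemma unbridged_graph_image:
  assumes "wf_graph H" "inj_on f (verts H)" "good_cycle H n c" "Q \<subseteq> verts H" "unbridged H c Q"
  shows "unbridged (graph_image f H) (f \<circ> c) (f ` Q)"
  unfolding unbridged_def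
proof (intro ballI impI)
  fix p z assume p: "p \<in> verts (graph_image f H)" and z: "z \<in> f ` Q"
    and a: "adj (graph_image f H) p z" "adj (graph_image f H) p ((f \<circ> c) 0)"
      "adj (graph_image f H) p ((f \<circ> c) 3)"
  have n: "5 \<le> n" using good_cycle_length[OF assms(3)] .
  have cv: "c 0 \<in> verts H" "c 1 \<in> verts H" "c 2 \<in> verts H" "c 3 \<in> verts H"
    using good_cycle_vertex[OF assms(3)] n by auto
  obtain w where w: "w \<in> verts H" "p = f w" using p unfolding verts_graph_image by blast
  obtain u where u: "u \<in> Q" "z = f u" using z by blast
  note adj_f = adj_graph_image_iff[OF assms(1,2) w(1)]
  have "adj H w u" "adj H w (c 0)" "adj H w (c 3)"
    using a w u adj_f[of u] adj_f[OF cv(1)] adj_f[OF cv(4)] assms(4) by auto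
  then have "adj H w (c 1) \<or> adj H w (c 2)" using assms(5) w(1) u(1) unfolding unbridged_def by blast
  then show "adj (graph_image f H) p ((f \<circ> c) 1) \<or> adj (graph_image f H) p ((f \<circ> c) 2)"
    using w adj_f[OF cv(2)] adj_f[OF cv(3)] by auto
qed

definition middle_ears :: "nat \<Rightarrow> 'a graph \<Rightarrow> nat \<Rightarrow> bool" where
  "middle_ears n H q \<longleftrightarrow> wf_graph H \<and> (\<exists>c Q. good_cycle H n c \<and> Q \<subseteq> {z. ear H n c 1 2 z} \<and>
      clique H Q \<and> unbridged H c Q \<and> q \<le> card Q)"

definition flank_ears :: "nat \<Rightarrow> 'a graph \<Rightarrow> nat \<Rightarrow> bool" where
  "flank_ears n H q \<longleftrightarrow> wf_graph H \<and> (\<exists>c A B. good_cycle H n c \<and> A \<subseteq> {z. ear H n c 0 1 z} \<and>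
      B \<subseteq> {z. ear H n c 2 3 z} \<and> clique H A \<and> clique H B \<and> (\<forall>a\<in>A. \<forall>b\<in>B. \<not> adj H a b) \<and>
      q \<le> card A + card B)"

lemma middle_ears_KBe:
  assumes "middle_ears n H q"
  shows "flank_ears n (KBe H) (2 * q)"
proof -
  obtain c Q where H: "wf_graph H" "good_cycle H n c" "Q \<subseteq> {z. ear H n c 1 2 z}" "clique H Q"
    "unbridged H c Q" "q \<le> card Q"
    using assms unfolding middle_ears_def by blast
  obtain A B where "A \<subseteq> {z. ear (KBe H) n (cycle_biclique H n c) 0 1 z}"
    "B \<subseteq> {z. ear (KBe H) n (cycle_biclique H n c) 2 3 z}" "clique (KBe H) A" "clique (KBe H) B"
    "\<forall>a\<in>A. \<forall>b\<in>B. \<not> adj (KBe H) a b" "card A = card Q" "card B = card Q"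
    using flank_ear_cliques_KBe[OF H(1-5)] .
  then show ?thesis
    unfolding flank_ears_def using wf_graph_KBe[OF H(1)] good_cycle_KBe[OF H(1,2)] H(6)
    by (intro conjI exI[of _ "cycle_biclique H n c"] exI[of _ A] exI[of _ B]) auto
qed

lemma flank_ears_KBe:
  assumes "flank_ears n H q"
  shows "middle_ears n (KBe H) q"
proof -
  obtain c A B where H: "wf_graph H" "good_cycle H n c" "A \<subseteq> {z. ear H n c 0 1 z}"
    "B \<subseteq> {z. ear H n c 2 3 z}" "clique H A" "clique H B" "\<forall>a\<in>A. \<forall>b\<in>B. \<not> adj H a b"
    "q \<le> card A + card B"
    using assms unfolding flank_ears_def by blast
  obtain Q where "Q \<subseteq> {z. ear (KBe H) n (cycle_biclique H n c) 1 2 z}" "clique (KBe H) Q"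
    "unbridged (KBe H) (cycle_biclique H n c) Q" "card Q = card A + card B"
    using middle_ear_clique_KBe[OF H(1-7)] .
  then show ?thesis
    unfolding middle_ears_def using wf_graph_KBe[OF H(1)] good_cycle_KBe[OF H(1,2)] H(8)
    by (intro conjI exI[of _ "cycle_biclique H n c"] exI[of _ Q]) auto
qed

lemma middle_ears_relabel:
  assumes "middle_ears n H q"
  shows "middle_ears n (relabel H) q"
proof -
  obtain c Q where H: "wf_graph H" "good_cycle H n c" "Q \<subseteq> {z. ear H n c 1 2 z}" "clique H Q"
    "unbridged H c Q" "q \<le> card Q"
    using assms unfolding middle_ears_def by blast
  obtain f where f: "inj_on f (verts H)" "relabel H = graph_image f H"
    using relabel_eq_graph_image[OF finite_verts[OF H(1)]] .
  have Q_verts: "Q \<subseteq> verts H" using H(3) ear_in_verts[of H n c 1 2] by blast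
  have "f ` Q \<subseteq> {z. ear (graph_image f H) n (f \<circ> c) 1 2 z}"
    using ear_graph_image[OF H(1) f(1) H(2)] H(3) by blast
  moreover have "card (f ` Q) = card Q" using card_image[OF inj_on_subset[OF f(1) Q_verts]] .
  ultimately show ?thesis
    unfolding middle_ears_def f(2)
    using wf_graph_image[OF H(1) f(1)] good_cycle_graph_image[OF H(1) f(1) H(2)]
      clique_graph_image[OF H(1) f(1) Q_verts H(4)] unbridged_graph_image[OF H(1) f(1) H(2) Q_verts H(5)]
      H(6)
    by (intro conjI exI[of _ "f \<circ> c"] exI[of _ "f ` Q"]) auto
qed

lemma flank_ears_relabel:
  assumes "flank_ears n H q"
  shows "flank_ears n (relabel H) q"
proof -
  obtain c A B where H: "wf_graph H" "good_cycle H n c" "A \<subseteq> {z. ear H n c 0 1 z}"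
    "B \<subseteq> {z. ear H n c 2 3 z}" "clique H A" "clique H B" "\<forall>a\<in>A. \<forall>b\<in>B. \<not> adj H a b"
    "q \<le> card A + card B"
    using assms unfolding flank_ears_def by blast
  obtain f where f: "inj_on f (verts H)" "relabel H = graph_image f H"
    using relabel_eq_graph_image[OF finite_verts[OF H(1)]] .
  have AB_verts: "A \<subseteq> verts H" "B \<subseteq> verts H"
    using H(3,4) ear_in_verts[of H n c 0 1] ear_in_verts[of H n c 2 3] by blast+
  have "f ` A \<subseteq> {z. ear (graph_image f H) n (f \<circ> c) 0 1 z}"
    "f ` B \<subseteq> {z. ear (graph_image f H) n (f \<circ> c) 2 3 z}"
    using ear_graph_image[OF H(1) f(1) H(2)] H(3,4) by blast+
  moreover have "card (f ` A) = card A" "card (f ` B) = card B"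
    using card_image[OF inj_on_subset[OF f(1)]] AB_verts by blast+
  moreover have "\<forall>a\<in>f ` A. \<forall>b\<in>f ` B. \<not> adj (graph_image f H) a b"
    using adj_graph_image_iff[OF H(1) f(1)] H(7) AB_verts by fastforce
  ultimately show ?thesis
    unfolding flank_ears_def f(2)
    using wf_graph_image[OF H(1) f(1)] good_cycle_graph_image[OF H(1) f(1) H(2)]
      clique_graph_image[OF H(1) f(1) AB_verts(1) H(5)] clique_graph_image[OF H(1) f(1) AB_verts(2) H(6)]
      H(8)
    by (intro conjI exI[of _ "f \<circ> c"] exI[of _ "f ` A"] exI[of _ "f ` B"]) auto
qed

lemma card_le_card_verts: "wf_graph H \<Longrightarrow> X \<subseteq> verts H \<Longrightarrow> card X \<le> card (verts H)"
  using card_mono finite_verts by blast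

lemma middle_ears_card:
  assumes "middle_ears n H q"
  shows "q \<le> card (verts H)"
proof -
  obtain c Q where H: "wf_graph H" "Q \<subseteq> {z. ear H n c 1 2 z}" "q \<le> card Q"
    using assms unfolding middle_ears_def by blast
  then have "Q \<subseteq> verts H" using ear_in_verts[of H n c 1 2] by blast
  then show ?thesis using card_le_card_verts[OF H(1)] H(3) by (meson le_trans)
qed

lemma flank_ears_card:
  assumes "flank_ears n H q"
  shows "q \<le> card (verts H)"
proof -
  obtain c A B where H: "wf_graph H" "good_cycle H n c" "A \<subseteq> {z. ear H n c 0 1 z}"
    "B \<subseteq> {z. ear H n c 2 3 z}" "q \<le> card A + card B"
    using assms unfolding flank_ears_def by blast
  have AB_verts: "A \<subseteq> verts H" "B \<subseteq> verts H"
    using H(3,4) ear_in_verts[of H n c 0 1] ear_in_verts[of H n c 2 3] by blast+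
  have "x \<notin> B" if "x \<in> A" for x
  proof
    assume "x \<in> B"
    have "0 < n" using good_cycle_length[OF H(2)] by linarith
    moreover have "ear H n c 0 1 x" "ear H n c 2 3 x" using H(3,4) that \<open>x \<in> B\<close> by blast+
    ultimately show False using ear_adj_iff(1)[of H n c 0 1 x 0] ear_adj_iff(1)[of H n c 2 3 x 0] by simp
  qed
  then have "A \<inter> B = {}" by blast
  moreover have "finite A" "finite B" using finite_subset[OF _ finite_verts[OF H(1)]] AB_verts by auto
  ultimately have "card A + card B = card (A \<union> B)" by (simp add: card_Un_disjoint)
  also have "\<dots> \<le> card (verts H)" using AB_verts by (intro card_le_card_verts[OF H(1)]) blast
  finally show ?thesis using H(5) by linarith
qed

lemma flank_ears_necklace:
  assumes "wf_graph G" "n \<ge> 5" "induced_necklace G n m c K" "good_neighbours G n c"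
  shows "flank_ears n G 1"
proof -
  have N: "m \<ge> 1" "inj_on c {..<n}" "c ` {..<n} \<subseteq> verts G" "K \<subseteq> verts G" "finite K" "card K = m"
      "K \<inter> c ` {..<n} = {}"
      "\<forall>i<n. \<forall>j<n. adj G (c i) (c j) \<longleftrightarrow> (j = (i + 1) mod n \<or> i = (j + 1) mod n)"
      "\<forall>x\<in>K. \<forall>i<n. adj G x (c i) \<longleftrightarrow> (i = 0 \<or> i = 1)"
    using assms(3) unfolding induced_necklace_def by blast+
  have "good_cycle G n c" unfolding good_cycle_def using assms(2,4) N(2,3,8) by blast
  moreover obtain x where "x \<in> K" using N(1,5,6) by fastforce
  then have "ear G n c 0 1 x" unfolding ear_def using N(4,7,9) by blast
  moreover have "clique G {}" "clique G {x}" unfolding clique_def by blast+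
  ultimately show ?thesis
    unfolding flank_ears_def using assms(1)
    by (intro conjI exI[of _ c] exI[of _ "{x}"] exI[of _ "{}"]) auto
qed

lemma flank_ears_KBe_iter:
  assumes "flank_ears n G 1"
  shows "flank_ears n (KBe_iter (2 * k) G) (2 ^ k)"
proof (induction k)
  case 0
  then show ?case using flank_ears_relabel[OF assms] by simp
next
  case (Suc k)
  have "KBe_iter (2 * Suc k) G = relabel (KBe (relabel (KBe (KBe_iter (2 * k) G))))"
    by (simp add: numeral_2_eq_2)
  then show ?case
    using flank_ears_relabel[OF middle_ears_KBe[OF middle_ears_relabel[OF flank_ears_KBe[OF Suc.IH]]]]
    by simp
qed

lemma card_verts_KBe_iter:
  assumes "flank_ears n G 1"
  shows "t div 2 \<le> card (verts (KBe_iter t G))"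
proof -
  define k where "k = t div 2"
  have "k < 2 ^ k" by (rule less_exp)
  moreover have "t = 2 * k \<or> t = Suc (2 * k)" unfolding k_def by presburger
  then have "2 ^ k \<le> card (verts (KBe_iter t G))"
    using flank_ears_card[OF flank_ears_KBe_iter[OF assms]]
      middle_ears_card[OF middle_ears_relabel[OF flank_ears_KBe[OF flank_ears_KBe_iter[OF assms]]]]
    by auto
  ultimately show ?thesis unfolding k_def by linarith
qed

theorem mainTheorem11:
  fixes G :: "'a graph" and n m :: nat and c :: "nat \<Rightarrow> 'a" and K :: "'a set"
  assumes "wf_graph G"
    and "n \<ge> 5" and "m \<ge> 1"
    and "induced_necklace G n m c K"
    and "good_neighbours G n c"
  shows "filterlim (\<lambda>k. card (verts (KBe_iter k G))) at_top sequentially"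
proof -
  \<comment> \<open>The hypothesis m \<ge> 1 is part of induced_necklace already.\<close>
  have ears: "flank_ears n G 1" using flank_ears_necklace[OF assms(1,2,4,5)] .
  have "Z \<le> card (verts (KBe_iter t G))" if "2 * Z \<le> t" for Z t
    using card_verts_KBe_iter[OF ears, of t] that by linarith
  then show ?thesis unfolding filterlim_at_top eventually_sequentially by blast
qed

end
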